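(* Fix $t\ge2$ and $\alpha>1$, let $\theta_1,\dots,\theta_{t-1}\in\Theta$ be fixed, and let $\tau_1,\dots,\tau_{t-1}$ be independent with $\tau_i\sim p_{\theta_i}$. For every $\theta\in\Theta$ with $\eta_t(\theta)>0$ and every $\epsilon\ge0$, $$\mathbb P\left(\check J_t(\theta)-J(\theta)>\epsilon\right)\le\exp\left[-\frac{\epsilon^2\eta_t(\theta)}{2\left(1+\frac{\epsilon}{3}\sqrt{\frac{\eta_t(\theta)}{\alpha\log t}}\right)}\right].$$ Moreover, if $\epsilon\ge\sqrt{\frac{\alpha\log t}{\eta_t(\theta)}}$, $$\mathbb P\left(J(\theta)-\check J_t(\theta)>\epsilon\right)\le\exp\left[-\frac{\eta_t(\theta)}{2}\left(\epsilon-\sqrt{\frac{\alpha\log t}{\eta_t(\theta)}}\right)^2\right].$$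
   Context: Each parameter $\theta\in\Theta$ defines a policy $\pi_\theta$ of an MDP inducing a trajectory distribution $p_\theta$ (with density $p_\theta(\tau)$); the return satisfies $\mathcal R(\tau)\in[0,1]$ and $J(\theta)=\mathbb E_{\tau\sim p_\theta}[\mathcal R(\tau)]$. For probability measures $P\ll Q$, $d_2(P\|Q)=\int(\frac{dP}{dQ})^2dQ$ ($+\infty$ if $P\not\ll Q$). $\Phi_t=\frac1{t-1}\sum_{i=1}^{t-1}p_{\theta_i}$, $\eta_t(\theta)=\frac{t-1}{d_2(p_\theta\|\Phi_t)}$, truncation $M_t(\theta)=\sqrt{\frac{(t-1)d_2(p_\theta\|\Phi_t)}{\alpha\log t}}$, and $\check J_t(\theta)=\frac{1}{t-1}\sum_{i=1}^{t-1}\min\{M_t(\theta),\frac{p_\theta(\tau_i)}{\Phi_t(\tau_i)}\}\mathcal R(\tau_i)$. *)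

theory Defs
  imports "HOL-Probability.Probability"
begin

definition traj_densities :: "'t measure \<Rightarrow> ('p \<Rightarrow> 't \<Rightarrow> real) \<Rightarrow> bool" where
  "traj_densities mu p \<longleftrightarrow>
     (\<forall>th. p th \<in> borel_measurable mu \<and> (\<forall>x\<in>space mu. 0 \<le> p th x)
           \<and> (\<integral>\<^sup>+ x. ennreal (p th x) \<partial>mu) = 1)"

definition J_ret :: "'t measure \<Rightarrow> ('p \<Rightarrow> 't \<Rightarrow> real) \<Rightarrow> ('t \<Rightarrow> real) \<Rightarrow> 'p \<Rightarrow> real" where
  "J_ret mu p R th = (\<integral> x. R x * p th x \<partial>mu)"

definition Phi_mix :: "('p \<Rightarrow> 't \<Rightarrow> real) \<Rightarrow> (nat \<Rightarrow> 'p) \<Rightarrow> nat \<Rightarrow> 't \<Rightarrow> real" where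
  "Phi_mix p ths t x = (\<Sum>i\<in>{1..<t}. p (ths i) x) / real (t - 1)"

text \<open>Exponentiated 2-Renyi divergence d_2(P||Q) of P = f mu and Q = g mu:
  integral of (dP/dQ)^2 dQ if P << Q, infinity otherwise.\<close>
definition d2_div :: "'t measure \<Rightarrow> ('t \<Rightarrow> real) \<Rightarrow> ('t \<Rightarrow> real) \<Rightarrow> ennreal" where
  "d2_div mu f g =
     (if AE x in mu. g x = 0 \<longrightarrow> f x = 0
      then \<integral>\<^sup>+ x. ennreal (if g x = 0 then 0 else (f x)\<^sup>2 / g x) \<partial>mu
      else \<infinity>)"

definition d2_t :: "'t measure \<Rightarrow> ('p \<Rightarrow> 't \<Rightarrow> real) \<Rightarrow> (nat \<Rightarrow> 'p) \<Rightarrow> nat \<Rightarrow> 'p \<Rightarrow> ennreal" where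
  "d2_t mu p ths t th = d2_div mu (p th) (Phi_mix p ths t)"

definition eta_t :: "'t measure \<Rightarrow> ('p \<Rightarrow> 't \<Rightarrow> real) \<Rightarrow> (nat \<Rightarrow> 'p) \<Rightarrow> nat \<Rightarrow> 'p \<Rightarrow> real" where
  "eta_t mu p ths t th =
     (if d2_t mu p ths t th = \<infinity> then 0 else real (t - 1) / enn2real (d2_t mu p ths t th))"

definition M_t :: "'t measure \<Rightarrow> ('p \<Rightarrow> 't \<Rightarrow> real) \<Rightarrow> (nat \<Rightarrow> 'p) \<Rightarrow> real \<Rightarrow> nat \<Rightarrow> 'p \<Rightarrow> real" where
  "M_t mu p ths \<alpha> t th = sqrt (real (t - 1) * enn2real (d2_t mu p ths t th) / (\<alpha> * ln (real t)))"

definition J_check :: "'t measure \<Rightarrow> ('p \<Rightarrow> 't \<Rightarrow> real) \<Rightarrow> ('t \<Rightarrow> real) \<Rightarrow> (nat \<Rightarrow> 'p) \<Rightarrow> real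
    \<Rightarrow> nat \<Rightarrow> 'p \<Rightarrow> (nat \<Rightarrow> 't) \<Rightarrow> real" where
  "J_check mu p R ths \<alpha> t th xs =
     (\<Sum>i\<in>{1..<t}. min (M_t mu p ths \<alpha> t th) (p th (xs i) / Phi_mix p ths t (xs i)) * R (xs i))
       / real (t - 1)"

end

theory Submission
  imports Defs
begin

text \<open>The estimator is the average of the independent variables
  Y_i = min(M, p_theta/Phi_t)(tau_i) R(tau_i), which take values in [0, M]. On average over i their
  means are the Phi_t-integral of the truncated weighted return; this undershoots J(theta) by a bias
  between 0 and d_2/M, because w - min(M, w) <= w^2/M, and their second moments are at most
  d_2(p_theta||Phi_t). Bernstein's inequality, which rests on exp x <= 1 + x + x^2/(2(1 - c/3))
  for x <= c < 3, bounds the upper deviation. For the lower deviation the variables -Y_i are bounded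
  above by 0, so only the second moments enter, at the price of shifting epsilon by the bias.
  The choice M = M_t turns both exponents into the stated ones.\<close>

lemma exp_mult_one_minus_third_le:
  fixes x :: real
  shows "exp x * (1 - x / 3) \<le> 1 + 2 * x / 3 + x\<^sup>2 / 6"
proof -
  define F where "F = (\<lambda>x::real. 1 + 2 * x / 3 + x\<^sup>2 / 6 - exp x * (1 - x / 3))"
  define F' where "F' = (\<lambda>x::real. 2 / 3 + x / 3 - exp x * (2 / 3 - x / 3))"
  define F'' where "F'' = (\<lambda>x::real. 1 / 3 - exp x * (1 / 3 - x / 3))"
  have F_deriv: "(F has_real_derivative F' x) (at x)" for x
    unfolding F_def F'_def
    by (auto intro!: derivative_eq_intros simp: field_simps power2_eq_square)
  have F'_deriv: "(F' has_real_derivative F'' x) (at x)" for x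
    unfolding F'_def F''_def by (auto intro!: derivative_eq_intros simp: field_simps)
  have F''_nonneg: "0 \<le> F'' x" for x
  proof -
    have "exp x * (1 - x) \<le> exp x * exp (- x)"
      using exp_ge_add_one_self[of "- x"] by (intro mult_left_mono) auto
    then show ?thesis by (simp add: F''_def exp_minus field_simps)
  qed
  have "F 0 \<le> F x"
  proof (cases "0 \<le> x")
    case True
    have "0 \<le> F' y" if "0 \<le> y" for y
      using deriv_nonneg_imp_mono[of 0 y F' F''] F'_deriv F''_nonneg that
      by (auto simp: F'_def)
    then show ?thesis using deriv_nonneg_imp_mono[of 0 x F F'] F_deriv True by auto
  next
    case False
    have "F' y \<le> 0" if "y \<le> 0" for y
      using deriv_nonneg_imp_mono[of y 0 F' F''] F'_deriv F''_nonneg that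
      by (auto simp: F'_def)
    then show ?thesis using deriv_nonpos_imp_antimono[of x 0 F F'] F_deriv False by auto
  qed
  then show ?thesis by (simp add: F_def)
qed

lemma exp_le_Bernstein_quadratic:
  fixes x c :: real
  assumes "x \<le> c" "0 \<le> c" "c < 3"
  shows "exp x \<le> 1 + x + x\<^sup>2 / (2 * (1 - c / 3))"
proof -
  have pos: "0 < 1 - x / 3" using assms by simp
  have "exp x \<le> (1 + 2 * x / 3 + x\<^sup>2 / 6) / (1 - x / 3)"
    using exp_mult_one_minus_third_le[of x] pos by (simp add: field_simps)
  also have "\<dots> = 1 + x + x\<^sup>2 / (2 * (1 - x / 3))"
    using pos by (simp add: field_simps power2_eq_square)
  also have "x\<^sup>2 / (2 * (1 - x / 3)) \<le> x\<^sup>2 / (2 * (1 - c / 3))"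
    using assms by (intro divide_left_mono) auto
  finally show ?thesis by simp
qed

lemma diff_min_le_square_div:
  fixes w m :: real
  assumes "0 \<le> w" "0 < m"
  shows "w - min m w \<le> w\<^sup>2 / m"
proof (cases "w \<le> m")
  case False
  then have "w * 1 \<le> w * (w / m)"
    using assms by (intro mult_left_mono) auto
  then show ?thesis using False assms by (simp add: power2_eq_square)
qed (use assms in simp)

lemma (in prob_space) Chernoff_ineq_indep_sum_ge:
  fixes Z :: "'i \<Rightarrow> 'a \<Rightarrow> real"
  assumes fin: "finite I" and indep: "indep_vars (\<lambda>_. borel) Z I" and l: "0 < l"
    and mgf: "\<And>i. i \<in> I \<Longrightarrow> (\<integral>\<^sup>+x. ennreal (exp (l * Z i x)) \<partial>M) \<le> ennreal (exp (c i))"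
  shows "prob {x \<in> space M. s \<le> (\<Sum>i\<in>I. Z i x)} \<le> exp (- l * s + (\<Sum>i\<in>I. c i))"
proof -
  have [measurable]: "Z i \<in> borel_measurable M" if "i \<in> I" for i
    using indep that unfolding indep_vars_def by blast
  have "ennreal (prob {x \<in> space M. s \<le> (\<Sum>i\<in>I. Z i x)}) = emeasure M {x \<in> space M. s \<le> (\<Sum>i\<in>I. Z i x)}"
    by (simp add: emeasure_eq_measure)
  also have "\<dots> \<le> ennreal (exp (- l * s)) * (\<integral>\<^sup>+x\<in>space M. exp (l * (\<Sum>i\<in>I. Z i x)) \<partial>M)"
    by (intro Chernoff_ineq_nn_integral_ge l) auto
  also have "(\<integral>\<^sup>+x\<in>space M. exp (l * (\<Sum>i\<in>I. Z i x)) \<partial>M)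
      = (\<integral>\<^sup>+x. (\<Prod>i\<in>I. ennreal (exp (l * Z i x))) \<partial>M)"
    by (intro nn_integral_cong) (simp_all add: sum_distrib_left exp_sum fin prod_ennreal)
  also have "\<dots> = (\<Prod>i\<in>I. \<integral>\<^sup>+x. ennreal (exp (l * Z i x)) \<partial>M)"
    by (intro indep_vars_nn_integral fin indep_vars_compose2[OF indep]) auto
  also have "ennreal (exp (- l * s)) * \<dots> \<le> ennreal (exp (- l * s)) * (\<Prod>i\<in>I. ennreal (exp (c i)))"
    by (intro mult_left_mono prod_mono_ennreal mgf) auto
  also have "\<dots> = ennreal (exp (- l * s + (\<Sum>i\<in>I. c i)))"
    by (simp add: exp_add exp_diff exp_minus exp_sum[OF fin] prod_ennreal prod_nonneg field_simps
             flip: ennreal_mult)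
  finally show ?thesis
    by (subst (asm) ennreal_le_iff) simp_all
qed

lemma (in prob_space) nn_integral_exp_centered_le:
  fixes Z :: "'a \<Rightarrow> real"
  assumes Z: "integrable M Z" and Z2: "integrable M (\<lambda>x. (Z x)\<^sup>2)"
    and bnd: "\<And>x. x \<in> space M \<Longrightarrow> l * Z x \<le> c" and c: "0 \<le> c" "c < 3"
  shows "(\<integral>\<^sup>+x. ennreal (exp (l * (Z x - expectation Z))) \<partial>M)
           \<le> ennreal (exp (l\<^sup>2 * expectation (\<lambda>x. (Z x)\<^sup>2) / (2 * (1 - c / 3))))"
proof -
  define K where "K = 1 / (2 * (1 - c / 3))"
  have [measurable]: "Z \<in> borel_measurable M" using Z by blast
  have int_exp: "integrable M (\<lambda>x. exp (l * Z x))"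
    by (rule integrable_const_bound[where B = "exp c"]) (use bnd in auto)
  have "expectation (\<lambda>x. exp (l * Z x)) \<le> expectation (\<lambda>x. 1 + l * Z x + l\<^sup>2 * K * (Z x)\<^sup>2)"
  proof (rule integral_mono)
    fix x assume "x \<in> space M"
    then show "exp (l * Z x) \<le> 1 + l * Z x + l\<^sup>2 * K * (Z x)\<^sup>2"
      using exp_le_Bernstein_quadratic[OF bnd c] by (simp add: K_def power_mult_distrib)
  qed (use int_exp Z Z2 in auto)
  also have "\<dots> = 1 + l * expectation Z + l\<^sup>2 * K * expectation (\<lambda>x. (Z x)\<^sup>2)"
    using Z Z2 prob_space by simp
  also have "\<dots> \<le> exp (l * expectation Z + l\<^sup>2 * K * expectation (\<lambda>x. (Z x)\<^sup>2))"
    using exp_ge_add_one_self by (simp add: add.assoc)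
  finally have "exp (- l * expectation Z) * expectation (\<lambda>x. exp (l * Z x))
      \<le> exp (- l * expectation Z) * exp (l * expectation Z + l\<^sup>2 * K * expectation (\<lambda>x. (Z x)\<^sup>2))"
    by (rule mult_left_mono) simp
  then have "exp (- l * expectation Z) * expectation (\<lambda>x. exp (l * Z x))
      \<le> exp (l\<^sup>2 * K * expectation (\<lambda>x. (Z x)\<^sup>2))"
    by (simp flip: exp_add)
  moreover have "(\<integral>\<^sup>+x. ennreal (exp (l * (Z x - expectation Z))) \<partial>M)
      = ennreal (exp (- l * expectation Z) * expectation (\<lambda>x. exp (l * Z x)))"
    using int_exp
    by (subst nn_integral_eq_integral)
       (auto simp: right_diff_distrib exp_diff exp_minus field_simps)
  ultimately show ?thesis by (simp add: K_def ennreal_leI)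
qed

lemma (in prob_space) Bernstein_ineq_ge:
  fixes Z :: "'i \<Rightarrow> 'a \<Rightarrow> real"
  assumes fin: "finite I" and indep: "indep_vars (\<lambda>_. borel) Z I"
    and int: "\<And>i. i \<in> I \<Longrightarrow> integrable M (Z i)"
    and int2: "\<And>i. i \<in> I \<Longrightarrow> integrable M (\<lambda>x. (Z i x)\<^sup>2)"
    and bnd: "\<And>i x. i \<in> I \<Longrightarrow> x \<in> space M \<Longrightarrow> Z i x \<le> b" and b: "0 \<le> b"
    and V: "(\<Sum>i\<in>I. expectation (\<lambda>x. (Z i x)\<^sup>2)) \<le> V" "0 < V" and s: "0 < s"
  shows "prob {x \<in> space M. s \<le> (\<Sum>i\<in>I. Z i x - expectation (Z i))}
           \<le> exp (- (s\<^sup>2 / (2 * (V + b * s / 3))))"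
proof -
  define D where "D = V + b * s / 3"
  have D: "0 < D" using V b s by (simp add: D_def add_pos_nonneg)
  define l where "l = s / D"
  have l: "0 < l" using s D by (simp add: l_def)
  have lb: "l * b < 3" using V D by (simp add: l_def D_def field_simps)
  define K where "K = l\<^sup>2 / (2 * (1 - l * b / 3))"
  have K_eq: "K = l\<^sup>2 * D / (2 * V)"
    using D V by (simp add: K_def l_def D_def field_simps)
  have "prob {x \<in> space M. s \<le> (\<Sum>i\<in>I. Z i x - expectation (Z i))}
      \<le> exp (- l * s + (\<Sum>i\<in>I. K * expectation (\<lambda>x. (Z i x)\<^sup>2)))"
  proof (rule Chernoff_ineq_indep_sum_ge[OF fin _ l])
    show "indep_vars (\<lambda>_. borel) (\<lambda>i x. Z i x - expectation (Z i)) I"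
      by (rule indep_vars_compose2[OF indep, where Y = "\<lambda>i z. z - expectation (Z i)"]) auto
    fix i assume "i \<in> I"
    then show "(\<integral>\<^sup>+x. ennreal (exp (l * (Z i x - expectation (Z i)))) \<partial>M)
        \<le> ennreal (exp (K * expectation (\<lambda>x. (Z i x)\<^sup>2)))"
      using nn_integral_exp_centered_le[OF int int2, of i l "l * b"] l lb b bnd
      by (simp add: K_def mult_left_mono)
  qed
  also have "(\<Sum>i\<in>I. K * expectation (\<lambda>x. (Z i x)\<^sup>2)) \<le> K * V"
  proof -
    have "0 \<le> K" using D V by (simp add: K_eq)
    then show ?thesis using V(1) by (simp add: sum_distrib_left[symmetric] mult_left_mono)
  qed
  also have "- l * s + K * V = - (s\<^sup>2 / (2 * D))"
    using D V by (simp add: K_eq l_def field_simps power2_eq_square)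
  finally show ?thesis by (simp add: D_def)
qed

lemma (in prob_space) Bernstein_ineq_bounded_nonneg:
  fixes Y :: "'i \<Rightarrow> 'a \<Rightarrow> real"
  assumes fin: "finite I" and indep: "indep_vars (\<lambda>_. borel) Y I"
    and bnd: "\<And>i x. i \<in> I \<Longrightarrow> x \<in> space M \<Longrightarrow> 0 \<le> Y i x \<and> Y i x \<le> B"
    and V: "(\<Sum>i\<in>I. expectation (\<lambda>x. (Y i x)\<^sup>2)) \<le> V" "0 < V" and s: "0 < s"
  shows "prob {x \<in> space M. s \<le> (\<Sum>i\<in>I. Y i x - expectation (Y i))}
           \<le> exp (- (s\<^sup>2 / (2 * (V + B * s / 3))))"
    and "prob {x \<in> space M. s \<le> (\<Sum>i\<in>I. expectation (Y i) - Y i x)} \<le> exp (- (s\<^sup>2 / (2 * V)))"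
proof -
  have meas: "Y i \<in> borel_measurable M" if "i \<in> I" for i
    using indep that unfolding indep_vars_def by blast
  have int: "integrable M (Y i)" if "i \<in> I" for i
    using bnd[OF that] meas[OF that] by (intro integrable_const_bound[where B = B]) auto
  have int2: "integrable M (\<lambda>x. (Y i x)\<^sup>2)" if "i \<in> I" for i
    using bnd[OF that] meas[OF that]
    by (intro integrable_const_bound[where B = "B\<^sup>2"]) (auto intro: power_mono)
  have B: "0 \<le> B" if "i \<in> I" for i
    using bnd[OF that] not_empty by fastforce
  show "prob {x \<in> space M. s \<le> (\<Sum>i\<in>I. Y i x - expectation (Y i))}
      \<le> exp (- (s\<^sup>2 / (2 * (V + B * s / 3))))"
  proof (cases "I = {}")
    case False
    then show ?thesis
      using B bnd by (intro Bernstein_ineq_ge[OF fin indep int int2 _ _ V s]) auto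
  qed (use s in simp)
  have "prob {x \<in> space M. s \<le> (\<Sum>i\<in>I. - Y i x - expectation (\<lambda>x. - Y i x))}
      \<le> exp (- (s\<^sup>2 / (2 * (V + 0 * s / 3))))"
  proof (rule Bernstein_ineq_ge[OF fin _ _ _ _ _ _ V(2) s])
    show "indep_vars (\<lambda>_. borel) (\<lambda>i x. - Y i x) I"
      by (rule indep_vars_compose2[OF indep, where Y = "\<lambda>_ y. - y"]) auto
  qed (use int int2 bnd V(1) in auto)
  then show "prob {x \<in> space M. s \<le> (\<Sum>i\<in>I. expectation (Y i) - Y i x)} \<le> exp (- (s\<^sup>2 / (2 * V)))"
    by simp
qed

lemma integrable_mult_bounded:
  fixes f h :: "'a \<Rightarrow> real"
  assumes f: "integrable N f" and h: "h \<in> borel_measurable N"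
    and bnd: "\<And>x. x \<in> space N \<Longrightarrow> \<bar>h x\<bar> \<le> B"
  shows "integrable N (\<lambda>x. f x * h x)"
proof (rule Bochner_Integration.integrable_bound[where f = "\<lambda>x. B * f x"])
  show "AE x in N. norm (f x * h x) \<le> norm (B * f x)"
  proof (rule AE_I2)
    fix x assume x: "x \<in> space N"
    have "\<bar>f x\<bar> * \<bar>h x\<bar> \<le> \<bar>f x\<bar> * B" using bnd[OF x] by (intro mult_left_mono) auto
    moreover have "0 \<le> B" using bnd[OF x] by linarith
    ultimately show "norm (f x * h x) \<le> norm (B * f x)" by (simp add: abs_mult mult.commute)
  qed
qed (use f h in auto)

definition d2_density :: "('t \<Rightarrow> real) \<Rightarrow> ('t \<Rightarrow> real) \<Rightarrow> 't \<Rightarrow> real" where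
  "d2_density f g x = (if g x = 0 then 0 else (f x)\<^sup>2 / g x)"

lemma d2_div_finiteD:
  assumes fin: "d2_div mu f g \<noteq> \<infinity>"
    and [measurable]: "f \<in> borel_measurable mu" "g \<in> borel_measurable mu"
    and g_nonneg: "\<And>x. x \<in> space mu \<Longrightarrow> 0 \<le> g x"
  shows "AE x in mu. g x = 0 \<longrightarrow> f x = 0"
    and "integrable mu (d2_density f g)"
    and "enn2real (d2_div mu f g) = (\<integral>x. d2_density f g x \<partial>mu)"
proof -
  show abs_cont: "AE x in mu. g x = 0 \<longrightarrow> f x = 0"
    using fin unfolding d2_div_def by (auto split: if_splits)
  have nonneg: "0 \<le> d2_density f g x" if "x \<in> space mu" for x
    using g_nonneg[OF that] by (simp add: d2_density_def)
  have [measurable]: "d2_density f g \<in> borel_measurable mu"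
    unfolding d2_density_def by measurable
  have eq: "d2_div mu f g = (\<integral>\<^sup>+x. ennreal (d2_density f g x) \<partial>mu)"
    using abs_cont by (simp add: d2_div_def d2_density_def)
  show int: "integrable mu (d2_density f g)"
    using fin nonneg unfolding eq
    by (intro integrableI_nonneg) (auto simp: d2_density_def top.not_eq_extremum)
  show "enn2real (d2_div mu f g) = (\<integral>x. d2_density f g x \<partial>mu)"
    using nonneg by (simp add: eq nn_integral_eq_integral[OF int] integral_nonneg_AE)
qed

definition trunc_return :: "real \<Rightarrow> ('t \<Rightarrow> real) \<Rightarrow> ('t \<Rightarrow> real) \<Rightarrow> ('t \<Rightarrow> real) \<Rightarrow> 't \<Rightarrow> real" where
  "trunc_return m f g R x = min m (f x / g x) * R x"

context
  fixes mu :: "'t measure" and f g R :: "'t \<Rightarrow> real" and m :: real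
  assumes f_int: "integrable mu f" and g_int: "integrable mu g"
    and f_nonneg: "\<And>x. x \<in> space mu \<Longrightarrow> 0 \<le> f x"
    and g_nonneg: "\<And>x. x \<in> space mu \<Longrightarrow> 0 \<le> g x"
    and R_meas: "R \<in> borel_measurable mu"
    and R_range: "\<And>x. x \<in> space mu \<Longrightarrow> 0 \<le> R x \<and> R x \<le> 1"
    and d2_fin: "d2_div mu f g \<noteq> \<infinity>" and m: "0 < m"
begin

lemma trunc_return_le_min:
  assumes "x \<in> space mu"
  shows "0 \<le> trunc_return m f g R x \<and> trunc_return m f g R x \<le> min m (f x / g x)"
proof -
  have "0 \<le> min m (f x / g x)"
    using f_nonneg[OF assms] g_nonneg[OF assms] m by simp
  moreover have "min m (f x / g x) * R x \<le> min m (f x / g x)"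
    using R_range[OF assms] \<open>0 \<le> min m (f x / g x)\<close> by (intro mult_left_le) auto
  ultimately show ?thesis
    using R_range[OF assms] by (simp add: trunc_return_def)
qed

lemma trunc_return_bounds:
  assumes "x \<in> space mu"
  shows "0 \<le> trunc_return m f g R x \<and> trunc_return m f g R x \<le> m"
  using trunc_return_le_min[OF assms] by linarith

lemma trunc_return_measurable: "trunc_return m f g R \<in> borel_measurable mu"
  using f_int g_int R_meas unfolding trunc_return_def by measurable

lemma integral_trunc_return_sq_le:
  "(\<integral>x. g x * (trunc_return m f g R x)\<^sup>2 \<partial>mu) \<le> enn2real (d2_div mu f g)"
proof -
  have "g x * (trunc_return m f g R x)\<^sup>2 \<le> d2_density f g x" if x: "x \<in> space mu" for x
  proof (cases "g x = 0")
    case False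
    then have g_pos: "0 < g x" using g_nonneg[OF x] by simp
    have "trunc_return m f g R x \<le> f x / g x"
      using trunc_return_le_min[OF x] by linarith
    then have "(trunc_return m f g R x)\<^sup>2 \<le> (f x / g x)\<^sup>2"
      using trunc_return_bounds[OF x] by (intro power_mono) auto
    then have "g x * (trunc_return m f g R x)\<^sup>2 \<le> g x * (f x / g x)\<^sup>2"
      using g_pos by (intro mult_left_mono) auto
    then show ?thesis using g_pos by (simp add: d2_density_def power2_eq_square)
  qed (simp add: d2_density_def)
  moreover have "integrable mu (\<lambda>x. g x * (trunc_return m f g R x)\<^sup>2)"
    using trunc_return_bounds m trunc_return_measurable
    by (intro integrable_mult_bounded[OF g_int, where B = "m\<^sup>2"])
       (auto intro: power_mono)
  ultimately show ?thesis
    using d2_div_finiteD[OF d2_fin] f_int g_int g_nonneg by (auto intro: integral_mono)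
qed

lemma trunc_return_bias_bounds:
  "0 \<le> (\<integral>x. R x * f x \<partial>mu) - (\<integral>x. g x * trunc_return m f g R x \<partial>mu)"
  "(\<integral>x. R x * f x \<partial>mu) - (\<integral>x. g x * trunc_return m f g R x \<partial>mu) \<le> enn2real (d2_div mu f g) / m"
proof -
  note d2 = d2_div_finiteD[OF d2_fin borel_measurable_integrable[OF f_int]
                                     borel_measurable_integrable[OF g_int] g_nonneg]
  define bias where "bias x = R x * f x - g x * trunc_return m f g R x" for x
  have bias_bounds: "0 \<le> bias x \<and> bias x \<le> d2_density f g x / m"
    if x: "x \<in> space mu" and abs_cont: "g x = 0 \<longrightarrow> f x = 0" for x
  proof (cases "g x = 0")
    case False
    then have g_pos: "0 < g x" using g_nonneg[OF x] by simp
    define w where "w = f x / g x"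
    have w: "0 \<le> w" using f_nonneg[OF x] g_pos by (simp add: w_def)
    have bias_eq: "bias x = g x * R x * (w - min m w)"
      using g_pos by (simp add: bias_def trunc_return_def w_def algebra_simps)
    have "g x * R x * (w - min m w) \<le> g x * 1 * (w\<^sup>2 / m)"
      using R_range[OF x] g_pos diff_min_le_square_div[OF w m]
      by (intro mult_mono mult_left_mono) auto
    also have "\<dots> = d2_density f g x / m"
      using g_pos by (simp add: d2_density_def w_def power2_eq_square)
    finally show ?thesis
      using bias_eq g_pos R_range[OF x] by simp
  qed (use abs_cont in \<open>simp add: bias_def trunc_return_def d2_density_def\<close>)
  have int_Rf: "integrable mu (\<lambda>x. R x * f x)"
    using integrable_mult_bounded[OF f_int R_meas, of 1] R_range by (simp add: mult.commute)
  have int_gtr: "integrable mu (\<lambda>x. g x * trunc_return m f g R x)"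
    using trunc_return_bounds m
    by (intro integrable_mult_bounded[OF g_int trunc_return_measurable, where B = m]) auto
  have diff_eq: "(\<integral>x. R x * f x \<partial>mu) - (\<integral>x. g x * trunc_return m f g R x \<partial>mu) = (\<integral>x. bias x \<partial>mu)"
    using int_Rf int_gtr by (simp add: bias_def)
  have bias_AE: "AE x in mu. 0 \<le> bias x \<and> bias x \<le> d2_density f g x / m"
    using d2(1) by (rule AE_mp) (auto intro!: AE_I2 bias_bounds)
  show "0 \<le> (\<integral>x. R x * f x \<partial>mu) - (\<integral>x. g x * trunc_return m f g R x \<partial>mu)"
    unfolding diff_eq using bias_AE by (intro integral_nonneg_AE) auto
  have "(\<integral>x. bias x \<partial>mu) \<le> (\<integral>x. d2_density f g x / m \<partial>mu)"
    using bias_AE int_Rf int_gtr d2(2) by (intro integral_mono_AE) (auto simp: bias_def)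
  then show "(\<integral>x. R x * f x \<partial>mu) - (\<integral>x. g x * trunc_return m f g R x \<partial>mu) \<le> enn2real (d2_div mu f g) / m"
    by (simp add: diff_eq d2(3))
qed

end

locale mis_sampling = prob_space M for M :: "'w measure" +
  fixes mu :: "'t measure" and p :: "'p \<Rightarrow> 't \<Rightarrow> real" and R :: "'t \<Rightarrow> real"
    and X :: "nat \<Rightarrow> 'w \<Rightarrow> 't" and ths :: "nat \<Rightarrow> 'p" and t :: nat
  assumes dens: "traj_densities mu p"
    and R_meas: "R \<in> borel_measurable mu"
    and R_range: "\<And>x. x \<in> space mu \<Longrightarrow> 0 \<le> R x \<and> R x \<le> 1"
    and t: "2 \<le> t"
    and indep: "indep_vars (\<lambda>_. mu) X {1..<t}"
    and distr: "\<And>i. i \<in> {1..<t} \<Longrightarrow> distributed M mu (X i) (\<lambda>x. ennreal (p (ths i) x))"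
begin

lemma p_nonneg: "x \<in> space mu \<Longrightarrow> 0 \<le> p th x"
  using dens by (simp add: traj_densities_def)

lemma integrable_p: "integrable mu (p th)"
  using dens p_nonneg by (intro integrableI_nonneg) (auto simp: traj_densities_def intro!: AE_I2)

lemma Phi_mix_nonneg: "x \<in> space mu \<Longrightarrow> 0 \<le> Phi_mix p ths t x"
  by (simp add: Phi_mix_def p_nonneg sum_nonneg)

lemma integrable_Phi_mix: "integrable mu (Phi_mix p ths t)"
  unfolding Phi_mix_def by (intro integrable_divide Bochner_Integration.integrable_sum integrable_p)

lemma X_measurable: "i \<in> {1..<t} \<Longrightarrow> X i \<in> measurable M mu"
  using distr by (auto simp: distributed_def)

lemma sum_expectation_eq_mixture:
  assumes h: "h \<in> borel_measurable mu" and bnd: "\<And>x. x \<in> space mu \<Longrightarrow> \<bar>h x\<bar> \<le> B"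
  shows "(\<Sum>i\<in>{1..<t}. expectation (\<lambda>\<omega>. h (X i \<omega>)))
           = real (t - 1) * (\<integral>x. Phi_mix p ths t x * h x \<partial>mu)"
proof -
  have "(\<Sum>i\<in>{1..<t}. expectation (\<lambda>\<omega>. h (X i \<omega>))) = (\<Sum>i\<in>{1..<t}. \<integral>x. p (ths i) x * h x \<partial>mu)"
    using distributed_integral[OF distr h] p_nonneg by simp
  also have "\<dots> = (\<integral>x. (\<Sum>i\<in>{1..<t}. p (ths i) x) * h x \<partial>mu)"
    using integrable_mult_bounded[OF integrable_p h bnd]
    by (simp add: sum_distrib_right Bochner_Integration.integral_sum)
  also have "\<dots> = real (t - 1) * (\<integral>x. Phi_mix p ths t x * h x \<partial>mu)"
    using t by (simp add: Phi_mix_def field_simps)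
  finally show ?thesis .
qed

lemma trunc_return_sample_moments:
  assumes d2_fin: "d2_t mu p ths t th \<noteq> \<infinity>" and m: "0 < m"
    and Y_def: "Y = (\<lambda>i \<omega>. trunc_return m (p th) (Phi_mix p ths t) R (X i \<omega>))"
  shows "indep_vars (\<lambda>_. borel) Y {1..<t}"
    and "\<And>i \<omega>. i \<in> {1..<t} \<Longrightarrow> \<omega> \<in> space M \<Longrightarrow> 0 \<le> Y i \<omega> \<and> Y i \<omega> \<le> m"
    and "(\<Sum>i\<in>{1..<t}. expectation (\<lambda>\<omega>. (Y i \<omega>)\<^sup>2)) \<le> real (t - 1) * enn2real (d2_t mu p ths t th)"
    and "(\<Sum>i\<in>{1..<t}. expectation (Y i)) / real (t - 1) \<le> J_ret mu p R th"
    and "J_ret mu p R th \<le> (\<Sum>i\<in>{1..<t}. expectation (Y i)) / real (t - 1)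
                             + enn2real (d2_t mu p ths t th) / m"
proof -
  define g where "g = trunc_return m (p th) (Phi_mix p ths t) R"
  have d2_fin': "d2_div mu (p th) (Phi_mix p ths t) \<noteq> \<infinity>"
    using d2_fin by (simp add: d2_t_def)
  note trunc = integrable_p integrable_Phi_mix p_nonneg Phi_mix_nonneg R_meas R_range d2_fin' m
  have g_meas: "g \<in> borel_measurable mu"
    unfolding g_def by (rule trunc_return_measurable[OF trunc])
  have g_bounds: "0 \<le> g x \<and> g x \<le> m" if "x \<in> space mu" for x
    unfolding g_def by (rule trunc_return_bounds[OF trunc that])
  have g_abs: "\<bar>g x\<bar> \<le> m" and g_sq: "\<bar>(g x)\<^sup>2\<bar> \<le> m\<^sup>2" if "x \<in> space mu" for x
    using g_bounds[OF that] by (auto intro: power_mono)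
  have Y_eq: "Y = (\<lambda>i \<omega>. g (X i \<omega>))" by (simp add: Y_def g_def)
  show "indep_vars (\<lambda>_. borel) Y {1..<t}"
    unfolding Y_eq by (rule indep_vars_compose2[OF indep, where Y = "\<lambda>_. g"]) (use g_meas in auto)
  show "0 \<le> Y i \<omega> \<and> Y i \<omega> \<le> m" if "i \<in> {1..<t}" "\<omega> \<in> space M" for i \<omega>
    unfolding Y_eq by (rule g_bounds) (rule measurable_space[OF X_measurable[OF that(1)] that(2)])
  have "(\<Sum>i\<in>{1..<t}. expectation (\<lambda>\<omega>. (Y i \<omega>)\<^sup>2))
      = real (t - 1) * (\<integral>x. Phi_mix p ths t x * (g x)\<^sup>2 \<partial>mu)"
    unfolding Y_eq using g_meas g_sq by (intro sum_expectation_eq_mixture) auto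
  also have "\<dots> \<le> real (t - 1) * enn2real (d2_t mu p ths t th)"
    using integral_trunc_return_sq_le[OF trunc] by (simp add: g_def d2_t_def mult_left_mono)
  finally show "(\<Sum>i\<in>{1..<t}. expectation (\<lambda>\<omega>. (Y i \<omega>)\<^sup>2)) \<le> real (t - 1) * enn2real (d2_t mu p ths t th)" .
  have "(\<Sum>i\<in>{1..<t}. expectation (Y i)) / real (t - 1) = (\<integral>x. Phi_mix p ths t x * g x \<partial>mu)"
    unfolding Y_eq using sum_expectation_eq_mixture[OF g_meas g_abs] t by simp
  moreover have "J_ret mu p R th = (\<integral>x. R x * p th x \<partial>mu)"
    by (simp add: J_ret_def)
  ultimately show "(\<Sum>i\<in>{1..<t}. expectation (Y i)) / real (t - 1) \<le> J_ret mu p R th"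
    and "J_ret mu p R th \<le> (\<Sum>i\<in>{1..<t}. expectation (Y i)) / real (t - 1)
                             + enn2real (d2_t mu p ths t th) / m"
    using trunc_return_bias_bounds[OF trunc] by (simp_all add: g_def d2_t_def)
qed

lemma trunc_estimator_upper_tail:
  assumes D: "0 < enn2real (d2_t mu p ths t th)" and m: "0 < m" and eps: "0 \<le> \<epsilon>"
  shows "prob {\<omega> \<in> space M. (\<Sum>i\<in>{1..<t}. trunc_return m (p th) (Phi_mix p ths t) R (X i \<omega>)) / real (t - 1)
                            - J_ret mu p R th > \<epsilon>}
           \<le> exp (- (real (t - 1) * \<epsilon>\<^sup>2 / (2 * (enn2real (d2_t mu p ths t th) + m * \<epsilon> / 3))))"
proof (cases "\<epsilon> = 0")
  case False
  define Y where "Y = (\<lambda>i \<omega>. trunc_return m (p th) (Phi_mix p ths t) R (X i \<omega>))"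
  define n where "n = real (t - 1)"
  define D where "D = enn2real (d2_t mu p ths t th)"
  have n: "0 < n" using t by (simp add: n_def)
  have eps: "0 < \<epsilon>" using eps False by simp
  have d2_fin: "d2_t mu p ths t th \<noteq> \<infinity>" using assms by auto
  note samples = trunc_return_sample_moments[OF d2_fin m Y_def, folded n_def D_def]
  have [measurable]: "Y i \<in> borel_measurable M" if "i \<in> {1..<t}" for i
    using samples(1) that unfolding indep_vars_def by blast
  have "prob {\<omega> \<in> space M. (\<Sum>i\<in>{1..<t}. Y i \<omega>) / n - J_ret mu p R th > \<epsilon>}
      \<le> prob {\<omega> \<in> space M. n * \<epsilon> \<le> (\<Sum>i\<in>{1..<t}. Y i \<omega> - expectation (Y i))}"
  proof (rule finite_measure_mono)
    show "{\<omega> \<in> space M. (\<Sum>i\<in>{1..<t}. Y i \<omega>) / n - J_ret mu p R th > \<epsilon>}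
        \<subseteq> {\<omega> \<in> space M. n * \<epsilon> \<le> (\<Sum>i\<in>{1..<t}. Y i \<omega> - expectation (Y i))}"
      using samples(4) n by (auto simp: sum_subtractf field_simps)
  qed measurable
  also have "\<dots> \<le> exp (- ((n * \<epsilon>)\<^sup>2 / (2 * (n * D + m * (n * \<epsilon>) / 3))))"
    using samples n D eps by (intro Bernstein_ineq_bounded_nonneg) (auto simp: D_def)
  also have "(n * \<epsilon>)\<^sup>2 / (2 * (n * D + m * (n * \<epsilon>) / 3))
      = (n * (n * \<epsilon>\<^sup>2)) / (n * (2 * (D + m * \<epsilon> / 3)))"
    by (simp add: power2_eq_square algebra_simps)
  also have "\<dots> = n * \<epsilon>\<^sup>2 / (2 * (D + m * \<epsilon> / 3))"
    using n by simp
  finally show ?thesis by (simp add: Y_def n_def D_def)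
qed simp

lemma trunc_estimator_lower_tail:
  assumes D: "0 < enn2real (d2_t mu p ths t th)" and m: "0 < m"
    and eps: "enn2real (d2_t mu p ths t th) / m \<le> \<epsilon>"
  shows "prob {\<omega> \<in> space M. J_ret mu p R th
                 - (\<Sum>i\<in>{1..<t}. trunc_return m (p th) (Phi_mix p ths t) R (X i \<omega>)) / real (t - 1) > \<epsilon>}
           \<le> exp (- (real (t - 1) * (\<epsilon> - enn2real (d2_t mu p ths t th) / m)\<^sup>2
                     / (2 * enn2real (d2_t mu p ths t th))))"
proof (cases "\<epsilon> = enn2real (d2_t mu p ths t th) / m")
  case False
  define Y where "Y = (\<lambda>i \<omega>. trunc_return m (p th) (Phi_mix p ths t) R (X i \<omega>))"
  define n where "n = real (t - 1)"
  define D where "D = enn2real (d2_t mu p ths t th)"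
  define s where "s = \<epsilon> - D / m"
  have n: "0 < n" using t by (simp add: n_def)
  have s: "0 < s" using eps False by (simp add: s_def D_def)
  have d2_fin: "d2_t mu p ths t th \<noteq> \<infinity>" using assms by auto
  note samples = trunc_return_sample_moments[OF d2_fin m Y_def, folded n_def D_def]
  have [measurable]: "Y i \<in> borel_measurable M" if "i \<in> {1..<t}" for i
    using samples(1) that unfolding indep_vars_def by blast
  have "prob {\<omega> \<in> space M. J_ret mu p R th - (\<Sum>i\<in>{1..<t}. Y i \<omega>) / n > \<epsilon>}
      \<le> prob {\<omega> \<in> space M. n * s \<le> (\<Sum>i\<in>{1..<t}. expectation (Y i) - Y i \<omega>)}"
  proof (rule finite_measure_mono)
    show "{\<omega> \<in> space M. J_ret mu p R th - (\<Sum>i\<in>{1..<t}. Y i \<omega>) / n > \<epsilon>}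
        \<subseteq> {\<omega> \<in> space M. n * s \<le> (\<Sum>i\<in>{1..<t}. expectation (Y i) - Y i \<omega>)}"
      using samples(5) n by (auto simp: s_def sum_subtractf field_simps)
  qed measurable
  also have "\<dots> \<le> exp (- ((n * s)\<^sup>2 / (2 * (n * D))))"
    using samples n D s by (intro Bernstein_ineq_bounded_nonneg) (auto simp: D_def)
  also have "(n * s)\<^sup>2 / (2 * (n * D)) = n * s\<^sup>2 / (2 * D)"
    using n by (simp add: power2_eq_square)
  finally show ?thesis by (simp add: Y_def n_def D_def s_def)
qed simp

end

lemma J_check_eq_trunc_return:
  "J_check mu p R ths \<alpha> t th xs
     = (\<Sum>i\<in>{1..<t}. trunc_return (M_t mu p ths \<alpha> t th) (p th) (Phi_mix p ths t) R (xs i)) / real (t - 1)"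
  by (simp add: J_check_def trunc_return_def)

lemma eta_t_posD:
  assumes "0 < eta_t mu p ths t th"
  shows "0 < enn2real (d2_t mu p ths t th)"
    and "eta_t mu p ths t th = real (t - 1) / enn2real (d2_t mu p ths t th)"
  using assms by (auto simp: eta_t_def zero_less_divide_iff split: if_splits)

lemma M_t_sqrt_eta_t:
  assumes t: "2 \<le> t" and \<alpha>: "1 < \<alpha>" and eta: "0 < eta_t mu p ths t th"
  defines "D \<equiv> enn2real (d2_t mu p ths t th)" and "Mt \<equiv> M_t mu p ths \<alpha> t th"
  shows "0 < Mt"
    and "sqrt (eta_t mu p ths t th / (\<alpha> * ln (real t))) = Mt / D"
    and "sqrt (\<alpha> * ln (real t) / eta_t mu p ths t th) = D / Mt"
proof -
  have D: "0 < D" and eta_eq: "eta_t mu p ths t th = real (t - 1) / D"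
    using eta_t_posD[OF eta] by (simp_all add: D_def)
  have L: "0 < \<alpha> * ln (real t)" using t \<alpha> by simp
  have n: "0 < real (t - 1)" using t by simp
  have Mt_sq: "Mt * Mt = real (t - 1) * D / (\<alpha> * ln (real t))"
    using n D L by (simp add: Mt_def M_t_def D_def)
  show Mt: "0 < Mt"
    using n D L by (simp add: Mt_def M_t_def D_def)
  show "sqrt (eta_t mu p ths t th / (\<alpha> * ln (real t))) = Mt / D"
    using Mt D L by (intro real_sqrt_unique) (simp_all add: eta_eq power_divide Mt_sq field_simps power2_eq_square)
  show "sqrt (\<alpha> * ln (real t) / eta_t mu p ths t th) = D / Mt"
    using Mt D n L by (intro real_sqrt_unique) (simp_all add: eta_eq power_divide Mt_sq field_simps power2_eq_square)
qed

theorem lemma3: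
  fixes mu :: "'t measure" and p :: "'p \<Rightarrow> 't \<Rightarrow> real" and R :: "'t \<Rightarrow> real"
    and M :: "'w measure" and X :: "nat \<Rightarrow> 'w \<Rightarrow> 't"
    and ths :: "nat \<Rightarrow> 'p" and th :: 'p and t :: nat and \<alpha> \<epsilon> :: real
  assumes dens: "traj_densities mu p"
    and R_meas: "R \<in> borel_measurable mu"
    and R_range: "\<And>x. x \<in> space mu \<Longrightarrow> 0 \<le> R x \<and> R x \<le> 1"
    and t: "t \<ge> 2" and alpha: "\<alpha> > 1"
    and P: "prob_space M"
    and indep: "prob_space.indep_vars M (\<lambda>_. mu) X {1..<t}"
    and distr: "\<And>i. i \<in> {1..<t} \<Longrightarrow> distributed M mu (X i) (\<lambda>x. ennreal (p (ths i) x))"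
    and eta_pos: "eta_t mu p ths t th > 0"
    and eps: "\<epsilon> \<ge> 0"
  shows "measure M {\<omega> \<in> space M. J_check mu p R ths \<alpha> t th (\<lambda>i. X i \<omega>) - J_ret mu p R th > \<epsilon>}
           \<le> exp (- (\<epsilon>\<^sup>2 * eta_t mu p ths t th
                     / (2 * (1 + \<epsilon> / 3 * sqrt (eta_t mu p ths t th / (\<alpha> * ln (real t)))))))
         \<and> (\<epsilon> \<ge> sqrt (\<alpha> * ln (real t) / eta_t mu p ths t th) \<longrightarrow>
         measure M {\<omega> \<in> space M. J_ret mu p R th - J_check mu p R ths \<alpha> t th (\<lambda>i. X i \<omega>) > \<epsilon>}
           \<le> exp (- (eta_t mu p ths t th / 2
                     * (\<epsilon> - sqrt (\<alpha> * ln (real t) / eta_t mu p ths t th))\<^sup>2)))"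
proof -
  interpret mis_sampling M mu p R X ths t
    using P dens R_meas R_range t indep distr by (simp add: mis_sampling_def mis_sampling_axioms_def)
  define n where "n = real (t - 1)"
  define D where "D = enn2real (d2_t mu p ths t th)"
  define Mt where "Mt = M_t mu p ths \<alpha> t th"
  define \<eta> where "\<eta> = eta_t mu p ths t th"
  have D: "0 < D" and \<eta>: "\<eta> = n / D"
    using eta_t_posD[OF eta_pos] by (simp_all add: D_def n_def \<eta>_def)
  note Mt = M_t_sqrt_eta_t[OF t alpha eta_pos, folded D_def Mt_def \<eta>_def]
  have "prob {\<omega> \<in> space M. J_check mu p R ths \<alpha> t th (\<lambda>i. X i \<omega>) - J_ret mu p R th > \<epsilon>}
      \<le> exp (- (n * \<epsilon>\<^sup>2 / (2 * (D + Mt * \<epsilon> / 3))))"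
    using trunc_estimator_upper_tail[OF D[unfolded D_def] Mt(1)[unfolded Mt_def] eps]
    by (simp add: J_check_eq_trunc_return n_def D_def Mt_def)
  also have "n * \<epsilon>\<^sup>2 / (2 * (D + Mt * \<epsilon> / 3)) = \<epsilon>\<^sup>2 * \<eta> / (2 * (1 + \<epsilon> / 3 * sqrt (\<eta> / (\<alpha> * ln (real t)))))"
    unfolding Mt(2) using D by (simp add: \<eta> field_simps)
  moreover have "prob {\<omega> \<in> space M. J_ret mu p R th - J_check mu p R ths \<alpha> t th (\<lambda>i. X i \<omega>) > \<epsilon>}
      \<le> exp (- (\<eta> / 2 * (\<epsilon> - sqrt (\<alpha> * ln (real t) / \<eta>))\<^sup>2))"
    if "sqrt (\<alpha> * ln (real t) / \<eta>) \<le> \<epsilon>"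
  proof -
    have "prob {\<omega> \<in> space M. J_ret mu p R th - J_check mu p R ths \<alpha> t th (\<lambda>i. X i \<omega>) > \<epsilon>}
        \<le> exp (- (n * (\<epsilon> - D / Mt)\<^sup>2 / (2 * D)))"
      using trunc_estimator_lower_tail[OF D[unfolded D_def] Mt(1)[unfolded Mt_def]] that[unfolded Mt(3)]
      by (simp add: J_check_eq_trunc_return n_def D_def Mt_def)
    also have "n * (\<epsilon> - D / Mt)\<^sup>2 / (2 * D) = \<eta> / 2 * (\<epsilon> - sqrt (\<alpha> * ln (real t) / \<eta>))\<^sup>2"
      unfolding Mt(3) using D by (simp add: \<eta>)
    finally show ?thesis .
  qed
  ultimately show ?thesis by (simp add: \<eta>_def)
qed

end
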